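(* Let $d\ge1$, $p>1$ and $s\in(0,1)$ with $sp<d$, and let $\mathcal{C}=C(d,p)\,\frac{s(1-s)}{(d-sp)^{p-1}}$ be the fractional Sobolev constant described in the context. Then for every $u\in W^{s,p}(\mathbb{R}^d)$ and every real $c>0$, \[ \int_{\mathbb{R}^d}|u(x)|^p\log\left(\frac{|u(x)|^p}{\|u\|_{L^p(\mathbb{R}^d)}^p}\right)dx+\frac{d}{s}(1+\log c)\|u\|_{L^p(\mathbb{R}^d)}^p\le \frac{d\,e^{p-1}c^p\,\mathcal{C}}{sp}\int_{\mathbb{R}^d}\int_{\mathbb{R}^d}\frac{|u(x)-u(y)|^p}{|x-y|^{d+sp}}\,dx\,dy. \]
   Context: $W^{s,p}(\mathbb{R}^d)$ is the completion of $C_c^\infty(\mathbb{R}^d)$ under the norm $(\|u\|_{L^p}^p+[u]_{W^{s,p}}^p)^{1/p}$, where $[u]_{W^{s,p}(\mathbb{R}^d)}^p=\int_{\mathbb{R}^d}\int_{\mathbb{R}^d}\frac{|u(x)-u(y)|^p}{|x-y|^{d+sp}}dx\,dy$. $C(d,p)>0$ is a constant depending only on $d$ and $p$ such that, with $\mathcal{C}=C(d,p)\frac{s(1-s)}{(d-sp)^{p-1}}$ and $p^*_s=\frac{dp}{d-sp}$, the fractional Sobolev inequality $\|u\|_{L^{p^*_s}(\mathbb{R}^d)}\le \mathcal{C}^{1/p}[u]_{W^{s,p}(\mathbb{R}^d)}$ holds for all $s\in(0,1)$ with $sp<d$ and all $u\in W^{s,p}(\mathbb{R}^d)$ (such a constant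 exists by a theorem of Maz'ya and Shaposhnikova). *)

theory Defs
  imports "HOL-Analysis.Analysis"
begin

text \<open>Functions on R^d are modelled as functions on real^'n with d = CARD('n).
  Lebesgue measure is lebesgue.\<close>

fun Ck :: "nat \<Rightarrow> (real^'n \<Rightarrow> real) \<Rightarrow> bool" where
  "Ck 0 g = continuous_on UNIV g"
| "Ck (Suc k) g = ((\<forall>x. g differentiable (at x)) \<and> continuous_on UNIV g \<and>
      (\<forall>v. Ck k (\<lambda>x. frechet_derivative g (at x) v)))"

definition smooth :: "(real^'n \<Rightarrow> real) \<Rightarrow> bool" where
  "smooth g \<longleftrightarrow> (\<forall>k. Ck k g)"

definition Cc_inf :: "(real^'n \<Rightarrow> real) set" where
  "Cc_inf = {g. smooth g \<and> compact (closure {x. g x \<noteq> 0})}"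

definition Lp_pow :: "real \<Rightarrow> (real^'n \<Rightarrow> real) \<Rightarrow> ennreal" where
  "Lp_pow p u = (\<integral>\<^sup>+ x. ennreal (\<bar>u x\<bar> powr p) \<partial>lebesgue)"

definition gagliardo :: "real \<Rightarrow> real \<Rightarrow> (real^'n \<Rightarrow> real) \<Rightarrow> ennreal" where
  "gagliardo s p u = (\<integral>\<^sup>+ x. \<integral>\<^sup>+ y.
      ennreal (\<bar>u x - u y\<bar> powr p / norm (x - y) powr (real CARD('n) + s * p)) \<partial>lebesgue \<partial>lebesgue)"

text \<open>W^{s,p}(R^d): completion of C_c^infinity under (L^p-norm^p + Gagliardo^p)^(1/p),
  realised as the measurable functions approximable by C_c^infinity functions in this norm.\<close>
definition Wsp :: "real \<Rightarrow> real \<Rightarrow> (real^'n \<Rightarrow> real) set" where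
  "Wsp s p = {u. u \<in> borel_measurable lebesgue \<and>
      (\<exists>\<phi>. (\<forall>n. \<phi> n \<in> Cc_inf) \<and>
        ((\<lambda>n. Lp_pow p (\<lambda>x. \<phi> n x - u x) + gagliardo s p (\<lambda>x. \<phi> n x - u x)) \<longlonglongrightarrow> 0))}"

definition entropy :: "real \<Rightarrow> (real^'n \<Rightarrow> real) \<Rightarrow> ereal" where
  "entropy p u = (let N = enn2real (Lp_pow p u);
      f = (\<lambda>x. \<bar>u x\<bar> powr p * ln (\<bar>u x\<bar> powr p / N)) in
      enn2ereal (\<integral>\<^sup>+ x. ennreal (max 0 (f x)) \<partial>lebesgue)
      - enn2ereal (\<integral>\<^sup>+ x. ennreal (max 0 (- f x)) \<partial>lebesgue))"

end

theory Submission
  imports Defs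
begin

text \<open>Write \<open>N = \<parallel>u\<parallel>\<^sub>p\<^sup>p\<close> and \<open>Q = \<parallel>u\<parallel>\<^sub>q\<^sup>q\<close> for the Sobolev exponent \<open>q = dp/(d - sp)\<close>.
  Jensen's inequality for the concave logarithm under the probability density \<open>\<bar>u\<bar>\<^sup>p/N\<close>
  gives \<open>\<integral> \<bar>u\<bar>\<^sup>p ln (\<bar>u\<bar>\<^sup>p/N) \<le> q/(q - p) N ln (Q\<^bsup>p/q\<^esup>/N)\<close>, and \<open>q/(q - p) = d/(sp)\<close>.
  The Sobolev inequality bounds \<open>Q\<^bsup>p/q\<^esup>\<close> by \<open>\<C> [u]\<^sup>p\<close>, and the parameter \<open>c\<close> enters
  through \<open>ln y \<le> y/e\<close>. Jensen is used in pointwise form: a tangent line of \<open>ln\<close>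
  majorises the integrand by an integrable combination of \<open>\<bar>u\<bar>\<^sup>p\<close> and \<open>\<bar>u\<bar>\<^sup>q\<close>.\<close>

lemma ln_le_tangent:
  fixes z t :: real
  assumes "z > 0" "t > 0"
  shows "ln z \<le> z / t + ln t - 1"
proof -
  have "ln (z / t) \<le> z / t - 1" using assms by (intro ln_le_minus_one) simp
  thus ?thesis using assms by (simp add: ln_div)
qed

text \<open>The tangent line of \<open>ln\<close> at \<open>T/N\<close>, evaluated at \<open>y\<^bsup>q-p\<^esup>\<close>.\<close>

lemma powr_ln_le_interpolation:
  fixes y p q N T :: real
  assumes y: "y \<ge> 0" and p: "p > 0" and pq: "p < q" and N: "N > 0" and T: "T > 0"
  shows "y powr p * ln (y powr p / N) \<le>
     (p / (q - p) * N / T) * y powr q + (p / (q - p) * (ln (T / N) - 1) - ln N) * y powr p"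
proof (cases "y = 0")
  case True
  thus ?thesis using p pq by simp
next
  case False
  with y have y: "y > 0" by simp
  define a where "a = p / (q - p)"
  define z where "z = y powr (q - p)"
  have a: "a > 0" using p pq by (simp add: a_def)
  have z: "z > 0" using y by (simp add: z_def)
  have "ln (y powr p / N) = a * ln z - ln N"
    using y N pq by (simp add: ln_div ln_powr z_def a_def)
  also have "\<dots> \<le> a * (z * N / T + ln (T / N) - 1) - ln N"
    using ln_le_tangent[OF z, of "T / N"] N T a by (simp add: mult_left_mono)
  finally have "y powr p * ln (y powr p / N) \<le> y powr p * (a * (z * N / T + ln (T / N) - 1) - ln N)"
    using y by (intro mult_left_mono) auto
  also have "\<dots> = (a * N / T) * (y powr p * z) + (a * (ln (T / N) - 1) - ln N) * y powr p"
    by (simp add: algebra_simps)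
  also have "y powr p * z = y powr q"
    using y by (simp add: z_def powr_add[symmetric])
  finally show ?thesis by (simp add: a_def)
qed

lemma mult_ln_div_le_exp_powr:
  fixes N X p c :: real
  assumes N: "N > 0" and X: "X > 0" and c: "c > 0"
  shows "N * ln (X / N) + p * (1 + ln c) * N \<le> exp (p - 1) * c powr p * X"
proof -
  define Y where "Y = X * c powr p * exp p / N"
  have Y: "Y > 0" using X c N by (simp add: Y_def)
  have "ln Y \<le> Y / exp 1"
    using ln_le_tangent[OF Y, of "exp 1"] by simp
  also have "Y / exp 1 = exp (p - 1) * c powr p * X / N"
    by (simp add: Y_def exp_diff mult_ac)
  also have "ln Y = ln (X / N) + p * (1 + ln c)"
    using X c N by (simp add: Y_def ln_mult ln_div ln_powr algebra_simps)
  finally have "N * (ln (X / N) + p * (1 + ln c)) \<le> N * (exp (p - 1) * c powr p * X / N)"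
    using N by (intro mult_left_mono) auto
  thus ?thesis using N by (simp add: algebra_simps)
qed

lemma powr_le_of_root_le:
  fixes x y p q :: real
  assumes "x \<ge> 0" "y \<ge> 0" "p > 0" "x powr (1 / q) \<le> y powr (1 / p)"
  shows "x powr (p / q) \<le> y"
proof -
  have "x powr (p / q) = (x powr (1 / q)) powr p" by (simp add: powr_powr)
  also have "\<dots> \<le> (y powr (1 / p)) powr p" using assms by (intro powr_mono2) auto
  also have "\<dots> = y" using assms by (simp add: powr_powr)
  finally show ?thesis .
qed

lemma pos_part_minus_neg_part_le_integral:
  fixes f h :: "'a \<Rightarrow> real"
  assumes h: "integrable M h" and fh: "\<And>x. f x \<le> h x"
  shows "enn2ereal (\<integral>\<^sup>+ x. ennreal (max 0 (f x)) \<partial>M)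
           - enn2ereal (\<integral>\<^sup>+ x. ennreal (max 0 (- f x)) \<partial>M)
         \<le> ereal (integral\<^sup>L M h)"
proof -
  have "(\<integral>\<^sup>+ x. ennreal (max 0 (f x)) \<partial>M) \<le> (\<integral>\<^sup>+ x. ennreal (h x) \<partial>M)"
    by (intro nn_integral_mono) (simp add: ennreal_max_0 ennreal_leI fh)
  moreover have "(\<integral>\<^sup>+ x. ennreal (- h x) \<partial>M) \<le> (\<integral>\<^sup>+ x. ennreal (max 0 (- f x)) \<partial>M)"
    by (intro nn_integral_mono) (simp add: ennreal_max_0 ennreal_leI fh)
  ultimately have "enn2ereal (\<integral>\<^sup>+ x. ennreal (max 0 (f x)) \<partial>M)
        - enn2ereal (\<integral>\<^sup>+ x. ennreal (max 0 (- f x)) \<partial>M)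
      \<le> enn2ereal (\<integral>\<^sup>+ x. ennreal (h x) \<partial>M) - enn2ereal (\<integral>\<^sup>+ x. ennreal (- h x) \<partial>M)"
    by (intro ereal_minus_mono) (simp_all add: less_eq_ennreal.rep_eq)
  also have "\<dots> = ereal (integral\<^sup>L M h)"
  proof -
    have finite: "(\<integral>\<^sup>+ x. ennreal (g x) \<partial>M) < \<infinity>" if "integrable M g" for g :: "'a \<Rightarrow> real"
    proof -
      have "(\<integral>\<^sup>+ x. ennreal (g x) \<partial>M) \<le> (\<integral>\<^sup>+ x. ennreal (norm (g x)) \<partial>M)"
        by (intro nn_integral_mono) (auto intro: ennreal_leI)
      also have "\<dots> < \<infinity>" using that by (simp add: integrable_iff_bounded)
      finally show ?thesis .
    qed
    have enn2ereal_finite: "enn2ereal X = ereal (enn2real X)" if "X < \<infinity>" for X :: ennreal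
      using that by (cases X) auto
    from finite[OF h] finite[of "\<lambda>x. - h x"] h show ?thesis
      by (simp add: enn2ereal_finite real_lebesgue_integral_def)
  qed
  finally show ?thesis .
qed

lemma integrable_Lp_pow:
  fixes u :: "real^'n \<Rightarrow> real"
  assumes u: "u \<in> borel_measurable lebesgue" and finite: "Lp_pow r u \<noteq> \<infinity>"
  shows "integrable lebesgue (\<lambda>x. \<bar>u x\<bar> powr r)"
proof -
  from finite obtain R where "Lp_pow r u = ennreal R" by (cases "Lp_pow r u") auto
  with u show ?thesis
    unfolding Lp_pow_def by (intro integrableI_nn_integral_finite) auto
qed

lemma integral_Lp_pow:
  fixes u :: "real^'n \<Rightarrow> real"
  assumes u: "u \<in> borel_measurable lebesgue"
  shows "integral\<^sup>L lebesgue (\<lambda>x. \<bar>u x\<bar> powr r) = enn2real (Lp_pow r u)"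
  unfolding Lp_pow_def using u by (intro integral_eq_nn_integral) auto

lemma Lp_pow_eq_0_iff:
  fixes u :: "real^'n \<Rightarrow> real"
  assumes u: "u \<in> borel_measurable lebesgue" and r: "r > 0"
  shows "Lp_pow r u = 0 \<longleftrightarrow> (AE x in lebesgue. u x = 0)"
proof -
  have "(\<lambda>x. ennreal (\<bar>u x\<bar> powr r)) \<in> borel_measurable lebesgue" using u by measurable
  hence "Lp_pow r u = 0 \<longleftrightarrow> (AE x in lebesgue. ennreal (\<bar>u x\<bar> powr r) = 0)"
    unfolding Lp_pow_def by (rule nn_integral_0_iff_AE)
  also have "\<dots> \<longleftrightarrow> (AE x in lebesgue. u x = 0)"
    by (rule AE_cong) simp
  finally show ?thesis .
qed

lemma entropy_le_Lp_interpolation: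
  fixes u :: "real^'n \<Rightarrow> real"
  assumes u: "u \<in> borel_measurable lebesgue" and p: "p > 0" and pq: "p < q"
    and Lp: "Lp_pow p u \<noteq> 0" "Lp_pow p u \<noteq> \<infinity>" and Lq: "Lp_pow q u \<noteq> \<infinity>"
  shows "entropy p u \<le> ereal (q / (q - p) * enn2real (Lp_pow p u)
           * ln (enn2real (Lp_pow q u) powr (p / q) / enn2real (Lp_pow p u)))"
proof -
  define N where "N = enn2real (Lp_pow p u)"
  define Q where "Q = enn2real (Lp_pow q u)"
  define a where "a = p / (q - p)"
  have N: "N > 0" using Lp by (simp add: N_def enn2real_positive_iff less_top zero_less_iff_neq_zero)
  have "Lp_pow q u \<noteq> 0" using Lp(1) p pq by (simp add: Lp_pow_eq_0_iff[OF u])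
  hence Q: "Q > 0" using Lq by (simp add: Q_def enn2real_positive_iff less_top zero_less_iff_neq_zero)
  define h where "h x = (a * N / Q) * \<bar>u x\<bar> powr q + (a * (ln (Q / N) - 1) - ln N) * \<bar>u x\<bar> powr p" for x
  have h: "integrable lebesgue h"
    unfolding h_def using integrable_Lp_pow[OF u] Lp Lq by simp
  have "entropy p u \<le> ereal (integral\<^sup>L lebesgue h)"
    unfolding entropy_def Let_def N_def[symmetric]
  proof (rule pos_part_minus_neg_part_le_integral[OF h])
    show "\<bar>u x\<bar> powr p * ln (\<bar>u x\<bar> powr p / N) \<le> h x" for x
      unfolding h_def a_def using powr_ln_le_interpolation[of "\<bar>u x\<bar>" p q N Q] p pq N Q by simp
  qed
  also have "integral\<^sup>L lebesgue h = (a * N / Q) * Q + (a * (ln (Q / N) - 1) - ln N) * N"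
    unfolding h_def using integrable_Lp_pow[OF u] Lp Lq
    by (simp add: integral_Lp_pow[OF u] N_def Q_def)
  also have "\<dots> = N * (a * ln Q - (a + 1) * ln N)"
    using N Q by (simp add: ln_div algebra_simps)
  also have "\<dots> = q / (q - p) * N * (p / q * ln Q - ln N)"
  proof -
    have "a = q / (q - p) * (p / q)" "a + 1 = q / (q - p)"
      using p pq by (simp_all add: a_def field_simps)
    thus ?thesis by (simp add: algebra_simps)
  qed
  also have "\<dots> = q / (q - p) * N * ln (Q powr (p / q) / N)"
    using N Q by (simp add: ln_div ln_powr)
  finally show ?thesis by (simp add: N_def Q_def)
qed

lemma entropy_le_of_Lp_pow_bound:
  fixes u :: "real^'n \<Rightarrow> real"
  assumes u: "u \<in> borel_measurable lebesgue" and p: "p > 0" and pq: "p < q"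
    and Lp: "Lp_pow p u \<noteq> 0" "Lp_pow p u \<noteq> \<infinity>" and Lq: "Lp_pow q u \<noteq> \<infinity>"
    and bound: "enn2real (Lp_pow q u) powr (p / q) \<le> X" and c: "c > 0"
  shows "entropy p u + ereal (q / (q - p) * p * (1 + ln c) * enn2real (Lp_pow p u))
           \<le> ereal (q / (q - p) * exp (p - 1) * c powr p * X)"
proof -
  define N where "N = enn2real (Lp_pow p u)"
  define Q where "Q = enn2real (Lp_pow q u)"
  define D where "D = q / (q - p)"
  have N: "N > 0" using Lp by (simp add: N_def enn2real_positive_iff less_top zero_less_iff_neq_zero)
  have "Lp_pow q u \<noteq> 0" using Lp(1) p pq by (simp add: Lp_pow_eq_0_iff[OF u])
  hence Q: "Q powr (p / q) > 0" using Lq by (simp add: Q_def enn2real_eq_0_iff)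
  have X: "X > 0" using Q bound unfolding Q_def by linarith
  have D: "D > 0" using p pq by (simp add: D_def)
  have "entropy p u \<le> ereal (D * N * ln (Q powr (p / q) / N))"
    using entropy_le_Lp_interpolation[OF u p pq Lp Lq] by (simp add: D_def N_def Q_def)
  also have "\<dots> \<le> ereal (D * N * ln (X / N))"
    using bound N Q D by (subst ereal_less_eq(3), intro mult_left_mono ln_mono divide_right_mono) (auto simp: Q_def)
  finally have "entropy p u + ereal (D * p * (1 + ln c) * N)
      \<le> ereal (D * N * ln (X / N)) + ereal (D * p * (1 + ln c) * N)"
    by (rule add_right_mono)
  also have "\<dots> = ereal (D * (N * ln (X / N) + p * (1 + ln c) * N))"
    by (simp add: algebra_simps)
  also have "\<dots> \<le> ereal (D * (exp (p - 1) * c powr p * X))"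
    using mult_ln_div_le_exp_powr[OF N X c, of p] D by simp
  finally show ?thesis by (simp add: D_def N_def mult_ac)
qed

theorem theorem1p2:
  fixes K p s c :: real
    and u :: "real^'n \<Rightarrow> real"
  assumes K_pos: "K > 0"
    and p: "p > 1"
    and sobolev: "\<And>s' (v :: real^'n \<Rightarrow> real). 0 < s' \<Longrightarrow> s' < 1 \<Longrightarrow> s' * p < real CARD('n) \<Longrightarrow>
        v \<in> Wsp s' p \<Longrightarrow>
        (let q = real CARD('n) * p / (real CARD('n) - s' * p) in
          Lp_pow q v \<noteq> \<infinity> \<and>
          enn2real (Lp_pow q v) powr (1 / q)
            \<le> (K * s' * (1 - s') / (real CARD('n) - s' * p) powr (p - 1)) powr (1 / p)
               * enn2real (gagliardo s' p v) powr (1 / p))"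
    and s: "0 < s" "s < 1" "s * p < real CARD('n)"
    and u: "u \<in> Wsp s p"
    and c: "c > 0"
  shows "entropy p u + ereal (real CARD('n) / s * (1 + ln c) * enn2real (Lp_pow p u))
    \<le> ereal (real CARD('n) * exp (p - 1) * c powr p
              * (K * s * (1 - s) / (real CARD('n) - s * p) powr (p - 1)) / (s * p))
      * enn2ereal (gagliardo s p u)"
proof -
  define d where "d = real CARD('n)"
  define C where "C = K * s * (1 - s) / (d - s * p) powr (p - 1)"
  define q where "q = d * p / (d - s * p)"
  have um: "u \<in> borel_measurable lebesgue" using u by (simp add: Wsp_def)
  have dsp: "d - s * p > 0" using s by (simp add: d_def)
  have C: "C > 0" using K_pos s dsp by (simp add: C_def)
  have A: "d * exp (p - 1) * c powr p * C / (s * p) > 0" using C c p s by (simp add: d_def)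
  have pq: "p < q" using dsp p s by (simp add: q_def field_simps)
  have D: "q / (q - p) = d / (s * p)" using dsp p s by (simp add: q_def field_simps)
  consider (degenerate) "enn2real (Lp_pow p u) = 0" | (infinite) "gagliardo s p u = \<infinity>"
    | (regular) g where "Lp_pow p u \<noteq> 0" "Lp_pow p u \<noteq> \<infinity>" "gagliardo s p u = ennreal g" "g \<ge> 0"
    by (cases "gagliardo s p u" rule: ennreal_cases) (auto simp: enn2real_eq_0_iff)
  then show ?thesis
  proof cases
    case degenerate
    \<comment> \<open>\<open>enn2real\<close> also sends \<open>\<infinity>\<close> to 0, and \<open>ln (y / 0) = ln 0 = 0\<close> kills the integrand.\<close>
    then have "entropy p u = 0" by (simp add: entropy_def)
    with degenerate A show ?thesis by (simp add: d_def C_def enn2ereal_nonneg)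
  next
    case infinite
    with A show ?thesis by (simp add: d_def C_def)
  next
    case regular
    have Lq: "Lp_pow q u \<noteq> \<infinity>"
      and sob: "enn2real (Lp_pow q u) powr (1 / q) \<le> C powr (1 / p) * g powr (1 / p)"
      using sobolev[OF s u] regular(3,4) by (simp_all add: Let_def q_def C_def d_def)
    have "enn2real (Lp_pow q u) powr (1 / q) \<le> (C * g) powr (1 / p)"
      using sob C regular(4) by (simp add: powr_mult)
    then have "enn2real (Lp_pow q u) powr (p / q) \<le> C * g"
      by (rule powr_le_of_root_le[rotated 3]) (use C regular(4) p in simp_all)
    from entropy_le_of_Lp_pow_bound[OF um _ pq regular(1,2) Lq this c] p
    have "entropy p u + ereal (d / s * (1 + ln c) * enn2real (Lp_pow p u))
        \<le> ereal (d / (s * p) * exp (p - 1) * c powr p * (C * g))"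
      unfolding D by simp
    also have "\<dots> = ereal (d * exp (p - 1) * c powr p * C / (s * p)) * enn2ereal (gagliardo s p u)"
      using regular by simp
    finally show ?thesis by (simp only: d_def C_def)
  qed
qed

end
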